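(* Let $(u_n)_{n \geq 1}$ be a virtual isometry. For $n \geq 1$ let $x_n := u_n(e_n)$, let $(f^{(n)}_k)_{1\le k\le n}$ be an orthonormal basis of $\mathbb{C}^n$ consisting of eigenvectors of $u_n$ with corresponding eigenvalues $(\lambda^{(n)}_k)_{1\le k\le n}$, let $P_n(z) := \det(z\,\mathrm{Id}_n - u_n)$, and write $x_{n+1} = \sum_{k=1}^n \mu^{(n)}_k f^{(n)}_k + \nu_n e_{n+1}$. Then for every $n \geq 1$ such that $x_{n+1} \neq e_{n+1}$, one has $\nu_n \neq 1$ and, for all $z \notin \{\lambda^{(n)}_1,\dots,\lambda^{(n)}_n\}$, $$P_{n+1}(z) = \frac{P_n(z)}{\overline{\nu_n} - 1}\left[(z - \nu_n)(\overline{\nu_n} - 1) - (z-1)\sum_{k=1}^n |\mu^{(n)}_k|^2 \frac{\lambda^{(n)}_k}{z - \lambda^{(n)}_k}\right].$$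
   Context: Let $(e_k)$ be the canonical basis of $\ell^2$; identify $\mathbb{C}^n$ with the span of $e_1,\dots,e_n$ (so $\mathbb{C}^n\subset\mathbb{C}^{n+1}$) and $U(n)$ with the unitary operators fixing every $e_k$, $k>n$. For $n\ge m\ge1$ and $u\in U(n)$, $\pi_{n,m}(u)$ is the unique $v\in U(m)$ such that the range of $u-v$ is contained in $(u-\mathrm{Id})(\mathrm{span}\{e_k:k>m\})$ (existence and uniqueness are known). A virtual isometry is a sequence $(u_n)_{n\ge1}$ with $u_n\in U(n)$ and $\pi_{n+1,n}(u_{n+1})=u_n$ for all $n\ge1$. *)

theory Defs
  imports Complex_Main "Jordan_Normal_Form.Determinant" "Jordan_Normal_Form.Conjugate"
begin

text \<open>Conventions: a finite-rank operator on l2 fixing e_k for k > N is represented by its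
  N x N block (a complex matrix, 0-based indices, so paper's e_k is unit_vec N (k-1)).\<close>

definition adjoint_mat :: "complex mat \<Rightarrow> complex mat" where
  "adjoint_mat A = mat (dim_col A) (dim_row A) (\<lambda>(i,j). cnj (A $$ (j,i)))"

definition unitary_mat :: "nat \<Rightarrow> complex mat \<Rightarrow> bool" where
  "unitary_mat n U \<longleftrightarrow> U \<in> carrier_mat n n \<and> U * adjoint_mat U = 1\<^sub>m n \<and> adjoint_mat U * U = 1\<^sub>m n"

definition emb_mat :: "nat \<Rightarrow> complex mat \<Rightarrow> complex mat" where
  "emb_mat N A = mat N N (\<lambda>(i,j). if i < dim_row A \<and> j < dim_row A then A $$ (i,j)
                                     else (if i = j then 1 else 0))"

definition emb_vec :: "nat \<Rightarrow> complex vec \<Rightarrow> complex vec" where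
  "emb_vec N v = vec N (\<lambda>i. if i < dim_vec v then v $ i else 0)"

text \<open>v in U(m) is such that range(u - v) is contained in (u - Id)(span{e_k : k > m}),
  for u in U(n). All operators involved fix e_k for k > n, so everything happens in C^n.\<close>
definition is_proj :: "nat \<Rightarrow> nat \<Rightarrow> complex mat \<Rightarrow> complex mat \<Rightarrow> bool" where
  "is_proj n m u v \<longleftrightarrow> unitary_mat m v \<and>
     (\<forall>x \<in> carrier_vec n. \<exists>y \<in> carrier_vec n. (\<forall>i<m. y $ i = 0) \<and>
         (u - emb_mat n v) *\<^sub>v x = (u - 1\<^sub>m n) *\<^sub>v y)"

definition proj :: "nat \<Rightarrow> nat \<Rightarrow> complex mat \<Rightarrow> complex mat" where
  "proj n m u = (THE v. is_proj n m u v)"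

definition virtual_isometry :: "(nat \<Rightarrow> complex mat) \<Rightarrow> bool" where
  "virtual_isometry u \<longleftrightarrow> (\<forall>n\<ge>1. unitary_mat n (u n)) \<and>
     (\<forall>n\<ge>1. proj (n+1) n (u (n+1)) = u n)"

end

theory Submission
  imports Defs
begin

text \<open>
  Write u = u(n+1), e = e(n+1), x = u e and \<nu> = x(n+1). As x is a unit vector, \<nu> = 1 forces
  x = e. For \<nu> \<noteq> 1 the projection \<pi>(n+1,n)(u) is explicit: it differs from u by a rank-one
  map with range \<complex>(x - e), namely  \<pi>(u) a = u a - ((u a)(n+1) - a(n+1)) / (\<nu> - 1) \<cdot> (x - e).
  Hence, on the orthonormal basis f(1), ..., f(n), e of \<complex>^(n+1), u acts by
  u f(k) = \<lambda>(k) f(k) + b(k) (x - e) and u e = e + (x - e), where unitarity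
  (\<langle>u f(k), u e\<rangle> = \<langle>f(k), e\<rangle> = 0) forces b(k) = \<lambda>(k) conj(\<mu>(k)) / (conj \<nu> - 1).
  So z - u is unitarily similar to a diagonal matrix minus a rank-one matrix, whose determinant
  is computed by column and row operations that reduce it to an arrowhead matrix.
\<close>

lemma cscalar_prod_sum:
  "b \<in> carrier_vec N \<Longrightarrow> a \<bullet>c b = (\<Sum>i<N. a $ i * cnj (b $ i))"
  unfolding scalar_prod_def by (auto simp: atLeast0LessThan intro!: sum.cong)

lemma index_mult_mat_vec_sum:
  "A \<in> carrier_mat M N \<Longrightarrow> v \<in> carrier_vec N \<Longrightarrow> i < M \<Longrightarrow>
    (A *\<^sub>v v) $ i = (\<Sum>j<N. A $$ (i,j) * v $ j)"
  by (auto simp: scalar_prod_def atLeast0LessThan intro!: sum.cong)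

lemma index_mult_mat_sum:
  "A \<in> carrier_mat M K \<Longrightarrow> B \<in> carrier_mat K N \<Longrightarrow> i < M \<Longrightarrow> j < N \<Longrightarrow>
    (A * B) $$ (i,j) = (\<Sum>k<K. A $$ (i,k) * B $$ (k,j))"
  by (auto simp: scalar_prod_def atLeast0LessThan intro!: sum.cong)

lemma col_eq_mult_unit_vec:
  "(A :: 'a :: semiring_1 mat) \<in> carrier_mat M N \<Longrightarrow> j < N \<Longrightarrow> col A j = A *\<^sub>v unit_vec N j"
  by (rule eq_vecI) auto

lemma cscalar_prod_swap:
  fixes a b :: "complex vec"
  shows "a \<in> carrier_vec N \<Longrightarrow> b \<in> carrier_vec N \<Longrightarrow> b \<bullet>c a = cnj (a \<bullet>c b)"
  by (metis conjugate_complex_def conjugate_conjugate_sprod conjugate_vec_sprod_comm)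

lemma cscalar_prod_minus_right:
  fixes a b c :: "complex vec"
  assumes "a \<in> carrier_vec N" "b \<in> carrier_vec N" "c \<in> carrier_vec N"
  shows "c \<bullet>c (a - b) = c \<bullet>c a - c \<bullet>c b"
  using assms cscalar_prod_swap[of _ N c] minus_scalar_prod_distrib[of a N b "conjugate c"]
  by (metis complex_cnj_diff minus_carrier_vec carrier_vec_conjugate)

lemma cscalar_prod_diff_smult:
  fixes x y w :: "complex vec"
  assumes "x \<in> carrier_vec N" "y \<in> carrier_vec N" "w \<in> carrier_vec N"
  shows "(x - s \<cdot>\<^sub>v w) \<bullet>c (y - t \<cdot>\<^sub>v w) =
    x \<bullet>c y - cnj t * (x \<bullet>c w) - s * (w \<bullet>c y) + s * cnj t * (w \<bullet>c w)"
  using assms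
  by (simp add: minus_scalar_prod_distrib[of _ N] cscalar_prod_minus_right[of _ N]
      conjugate_smult_vec algebra_simps)

lemma cscalar_prod_unit_vec_right:
  fixes a :: "complex vec"
  assumes a: "a \<in> carrier_vec N" and k: "k < N"
  shows "a \<bullet>c unit_vec N k = a $ k"
proof -
  have "a \<bullet>c unit_vec N k = (\<Sum>i<N. if i = k then a $ k else 0)"
    unfolding cscalar_prod_sum[OF unit_vec_carrier] by (rule sum.cong) (use k in auto)
  thus ?thesis using k by simp
qed

lemma cscalar_prod_unit_vec_unit_vec:
  "j < N \<Longrightarrow> k < N \<Longrightarrow> unit_vec N j \<bullet>c (unit_vec N k :: complex vec) = (if j = k then 1 else 0)"
  by (simp add: cscalar_prod_unit_vec_right)

lemma cscalar_prod_mult_mat_vec_left: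
  assumes A: "A \<in> carrier_mat N N" and a: "a \<in> carrier_vec N" and b: "(b :: complex vec) \<in> carrier_vec N"
  shows "(A *\<^sub>v a) \<bullet>c b = a \<bullet>c (adjoint_mat A *\<^sub>v b)"
proof -
  have AA: "adjoint_mat A \<in> carrier_mat N N" using A by (auto simp: adjoint_mat_def)
  have "(A *\<^sub>v a) \<bullet>c b = (\<Sum>i<N. \<Sum>j<N. a $ j * (A $$ (i,j) * cnj (b $ i)))"
    unfolding cscalar_prod_sum[OF b]
    by (rule sum.cong)
       (use A a in \<open>auto simp: index_mult_mat_vec_sum[OF A a] sum_distrib_left mult_ac
                          simp del: index_mult_mat_vec\<close>)
  also have "\<dots> = (\<Sum>j<N. \<Sum>i<N. a $ j * (A $$ (i,j) * cnj (b $ i)))"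
    by (rule sum.swap)
  also have "\<dots> = a \<bullet>c (adjoint_mat A *\<^sub>v b)"
    unfolding cscalar_prod_sum[OF mult_mat_vec_carrier[OF AA b]]
    by (rule sum.cong[OF refl], subst index_mult_mat_vec_sum[OF AA b])
       (use A in \<open>auto simp: adjoint_mat_def cnj_sum sum_distrib_left mult_ac\<close>)
  finally show ?thesis .
qed

lemma unitary_mat_cscalar_prod:
  assumes U: "unitary_mat N U" and a: "a \<in> carrier_vec N" and b: "(b :: complex vec) \<in> carrier_vec N"
  shows "(U *\<^sub>v a) \<bullet>c (U *\<^sub>v b) = a \<bullet>c b"
proof -
  have UC: "U \<in> carrier_mat N N" and UU: "adjoint_mat U * U = 1\<^sub>m N"
    using U by (auto simp: unitary_mat_def)
  have AA: "adjoint_mat U \<in> carrier_mat N N" using UC by (auto simp: adjoint_mat_def)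
  have "(U *\<^sub>v a) \<bullet>c (U *\<^sub>v b) = a \<bullet>c (adjoint_mat U *\<^sub>v (U *\<^sub>v b))"
    using cscalar_prod_mult_mat_vec_left[OF UC a] UC b by simp
  also have "adjoint_mat U *\<^sub>v (U *\<^sub>v b) = b"
    using assoc_mult_mat_vec[OF AA UC b] UU b by simp
  finally show ?thesis .
qed

lemma unitary_mat_if_orthonormal_cols:
  assumes G: "(G :: complex mat) \<in> carrier_mat m m"
    and orth: "\<And>i j. i < m \<Longrightarrow> j < m \<Longrightarrow> col G j \<bullet>c col G i = (if j = i then 1 else 0)"
  shows "unitary_mat m G"
proof -
  have AG: "adjoint_mat G \<in> carrier_mat m m" using G by (simp add: adjoint_mat_def)
  have GG: "adjoint_mat G * G = 1\<^sub>m m"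
  proof (rule eq_matI)
    fix i j assume "i < dim_row (1\<^sub>m m)" "j < dim_col (1\<^sub>m m)"
    hence i: "i < m" and j: "j < m" by auto
    have "(adjoint_mat G * G) $$ (i,j) = (\<Sum>k<m. col G j $ k * cnj (col G i $ k))"
      unfolding index_mult_mat_sum[OF AG G i j]
      by (rule sum.cong) (use i j G in \<open>auto simp: adjoint_mat_def mult.commute\<close>)
    also have "\<dots> = col G j \<bullet>c col G i" by (rule cscalar_prod_sum[symmetric, OF col_carrier_vec[OF i G]])
    finally show "(adjoint_mat G * G) $$ (i,j) = 1\<^sub>m m $$ (i,j)" using orth[OF i j] i j by auto
  qed (use G in \<open>auto simp: adjoint_mat_def\<close>)
  moreover have "G * adjoint_mat G = 1\<^sub>m m" by (rule mat_mult_left_right_inverse[OF AG G GG])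
  ultimately show ?thesis using G by (simp add: unitary_mat_def)
qed

lemma unitary_mat_of_orthonormal_family:
  fixes c :: "nat \<Rightarrow> complex vec"
  assumes c: "\<forall>k<m. c k \<in> carrier_vec m"
    and orth: "\<forall>k<m. \<forall>l<m. c k \<bullet>c c l = (if k = l then 1 else 0)"
  shows "unitary_mat m (mat m m (\<lambda>(i,j). c j $ i))"
proof (rule unitary_mat_if_orthonormal_cols)
  have col: "col (mat m m (\<lambda>(i,j). c j $ i)) j = c j" if "j < m" for j
    by (rule eq_vecI) (use c that in auto)
  show "col (mat m m (\<lambda>(i,j). c j $ i)) j \<bullet>c col (mat m m (\<lambda>(i,j). c j $ i)) i = (if j = i then 1 else 0)"
    if "i < m" "j < m" for i j
    unfolding col[OF that(1)] col[OF that(2)] using orth that by simp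
qed simp

lemma unitary_mat_if_isometry:
  assumes A: "(A :: complex mat) \<in> carrier_mat m m"
    and iso: "\<And>a b. a \<in> carrier_vec m \<Longrightarrow> b \<in> carrier_vec m \<Longrightarrow> (A *\<^sub>v a) \<bullet>c (A *\<^sub>v b) = a \<bullet>c b"
  shows "unitary_mat m A"
proof (rule unitary_mat_if_orthonormal_cols[OF A])
  fix i j assume i: "i < m" and j: "j < m"
  show "col A j \<bullet>c col A i = (if j = i then 1 else 0)"
    using iso[of "unit_vec m j" "unit_vec m i"] cscalar_prod_unit_vec_unit_vec[OF j i]
    by (simp add: col_eq_mult_unit_vec[OF A i] col_eq_mult_unit_vec[OF A j])
qed

lemma unitary_mat_col_eq_unit_vec:
  assumes U: "unitary_mat (n+1) U" and one: "U $$ (n,n) = 1"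
  shows "col U n = unit_vec (n+1) n"
proof -
  let ?x = "col U n"
  have UC: "U \<in> carrier_mat (n+1) (n+1)" using U by (auto simp: unitary_mat_def)
  have x: "?x = U *\<^sub>v unit_vec (n+1) n" by (rule eq_vecI) (use UC in auto)
  have xC: "?x \<in> carrier_vec (n+1)" by (rule col_carrier_vec[OF _ UC]) simp
  have "1 = ?x \<bullet>c ?x"
    using unitary_mat_cscalar_prod[OF U, of "unit_vec (n+1) n" "unit_vec (n+1) n"]
    by (simp add: x cscalar_prod_unit_vec_unit_vec)
  also have "\<dots> = (\<Sum>i<n. ?x $ i * cnj (?x $ i)) + 1"
    using one UC by (simp add: cscalar_prod_sum[OF xC])
  also have "(\<Sum>i<n. ?x $ i * cnj (?x $ i)) = complex_of_real (\<Sum>i<n. (cmod (?x $ i))\<^sup>2)"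
    unfolding of_real_sum by (rule sum.cong[OF refl], rule complex_norm_square[symmetric])
  finally have "complex_of_real (\<Sum>i<n. (cmod (?x $ i))\<^sup>2) = 0" by simp
  hence "(\<Sum>i<n. (cmod (?x $ i))\<^sup>2) = 0" by (simp only: of_real_eq_0_iff)
  hence "\<forall>i<n. ?x $ i = 0" by (simp add: sum_nonneg_eq_0_iff)
  thus ?thesis using one UC by (intro eq_vecI) (auto simp: less_Suc_eq)
qed

lemma cscalar_prod_orthonormal_combination:
  fixes c :: "nat \<Rightarrow> complex vec"
  assumes c: "\<forall>k<m. c k \<in> carrier_vec N"
    and orth: "\<forall>k<m. \<forall>l<m. c k \<bullet>c c l = (if k = l then 1 else 0)" and l: "l < m"
  shows "vec N (\<lambda>i. \<Sum>k<m. a k * c k $ i) \<bullet>c c l = a l"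
proof -
  have cl: "c l \<in> carrier_vec N" using c l by simp
  have "vec N (\<lambda>i. \<Sum>k<m. a k * c k $ i) \<bullet>c c l = (\<Sum>i<N. \<Sum>k<m. a k * (c k $ i * cnj (c l $ i)))"
    by (simp add: cscalar_prod_sum[OF cl] sum_distrib_left sum_distrib_right mult_ac)
  also have "\<dots> = (\<Sum>k<m. a k * (c k \<bullet>c c l))"
    by (subst sum.swap) (simp add: cscalar_prod_sum[OF cl] sum_distrib_left)
  also have "\<dots> = (\<Sum>k<m. if k = l then a l else 0)"
    by (rule sum.cong) (use orth l in auto)
  finally show ?thesis using l by simp
qed

lemma orthonormal_basis_expansion:
  fixes c :: "nat \<Rightarrow> complex vec"
  assumes c: "\<forall>k<m. c k \<in> carrier_vec m"
    and orth: "\<forall>k<m. \<forall>l<m. c k \<bullet>c c l = (if k = l then 1 else 0)" and v: "v \<in> carrier_vec m"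
  shows "v = vec m (\<lambda>i. \<Sum>k<m. (v \<bullet>c c k) * c k $ i)"
proof -
  define G where "G = mat m m (\<lambda>(i,j). c j $ i)"
  have G: "G \<in> carrier_mat m m" by (simp add: G_def)
  have AG: "adjoint_mat G \<in> carrier_mat m m" by (simp add: G_def adjoint_mat_def)
  have "G * adjoint_mat G = 1\<^sub>m m"
    using unitary_mat_of_orthonormal_family[OF c orth] by (simp add: G_def unitary_mat_def)
  hence "v = G *\<^sub>v (adjoint_mat G *\<^sub>v v)" using assoc_mult_mat_vec[OF G AG v] v by simp
  also have "\<dots> = vec m (\<lambda>i. \<Sum>k<m. (v \<bullet>c c k) * c k $ i)"
  proof (rule eq_vecI)
    fix i assume "i < dim_vec (vec m (\<lambda>i. \<Sum>k<m. (v \<bullet>c c k) * c k $ i))"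
    hence i: "i < m" by simp
    have adj: "(adjoint_mat G *\<^sub>v v) $ k = v \<bullet>c c k" if k: "k < m" for k
    proof -
      have ck: "c k \<in> carrier_vec m" using c k by simp
      show ?thesis unfolding index_mult_mat_vec_sum[OF AG v k] cscalar_prod_sum[OF ck]
        by (rule sum.cong) (use k in \<open>auto simp: G_def adjoint_mat_def mult.commute\<close>)
    qed
    show "(G *\<^sub>v (adjoint_mat G *\<^sub>v v)) $ i = vec m (\<lambda>i. \<Sum>k<m. (v \<bullet>c c k) * c k $ i) $ i"
      unfolding index_mult_mat_vec_sum[OF G mult_mat_vec_carrier[OF AG v] i] using i
      by (auto simp: adj mult.commute intro!: sum.cong) (simp add: G_def)
  qed (use G in simp)
  finally show ?thesis .
qed

section \<open>Determinants\<close>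

lemma det_eq_if_orthonormal_basis_action:
  fixes A B :: "complex mat" and c :: "nat \<Rightarrow> complex vec"
  assumes A: "A \<in> carrier_mat m m" and B: "B \<in> carrier_mat m m"
    and c: "\<forall>k<m. c k \<in> carrier_vec m"
    and orth: "\<forall>k<m. \<forall>l<m. c k \<bullet>c c l = (if k = l then 1 else 0)"
    and act: "\<forall>l<m. A *\<^sub>v c l = vec m (\<lambda>i. \<Sum>k<m. B $$ (k,l) * c k $ i)"
  shows "det A = det B"
proof -
  define G where "G = mat m m (\<lambda>(i,j). c j $ i)"
  have G: "G \<in> carrier_mat m m" by (simp add: G_def)
  have colG: "col G j = c j" if "j < m" for j
    by (rule eq_vecI) (use c that in \<open>auto simp: G_def\<close>)
  have "adjoint_mat G * G = 1\<^sub>m m"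
    using unitary_mat_of_orthonormal_family[OF c orth] by (simp add: G_def unitary_mat_def)
  hence "det (adjoint_mat G) * det G = 1"
    using det_mult[OF _ G, of "adjoint_mat G"] G by (simp add: adjoint_mat_def)
  hence detG: "det G \<noteq> 0" by auto
  have "A * G = G * B"
  proof (rule eq_matI)
    fix i l assume "i < dim_row (G * B)" "l < dim_col (G * B)"
    hence i: "i < m" and l: "l < m" using G B by auto
    have "(A * G) $$ (i,l) = (A *\<^sub>v c l) $ i" using A G i l colG[OF l] by simp
    also have "\<dots> = (\<Sum>k<m. G $$ (i,k) * B $$ (k,l))"
      using act i l by (simp add: G_def mult.commute)
    also have "\<dots> = (G * B) $$ (i,l)" by (rule index_mult_mat_sum[OF G B i l, symmetric])
    finally show "(A * G) $$ (i,l) = (G * B) $$ (i,l)" .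
  qed (use A G B in auto)
  hence "det A * det G = det G * det B" using det_mult[OF A G] det_mult[OF G B] by metis
  thus ?thesis using detG by auto
qed

lemma index_char_mat_mult_vec:
  assumes U: "(U :: complex mat) \<in> carrier_mat m m" and v: "v \<in> carrier_vec m" and i: "i < m"
  shows "((z \<cdot>\<^sub>m 1\<^sub>m m - U) *\<^sub>v v) $ i = z * v $ i - (U *\<^sub>v v) $ i"
proof -
  have "((z \<cdot>\<^sub>m 1\<^sub>m m - U) *\<^sub>v v) $ i = (\<Sum>j<m. (if j = i then z * v $ i else 0) - U $$ (i,j) * v $ j)"
    unfolding index_mult_mat_vec_sum[OF minus_carrier_mat[OF U] v i]
    by (rule sum.cong) (use U i in \<open>auto simp: left_diff_distrib\<close>)
  also have "\<dots> = z * v $ i - (U *\<^sub>v v) $ i"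
    using i by (simp add: sum_subtractf index_mult_mat_vec_sum[OF U v i] del: index_mult_mat_vec)
  finally show ?thesis .
qed

lemma det_char_mat_of_orthonormal_basis:
  fixes U :: "complex mat" and c :: "nat \<Rightarrow> complex vec" and \<Lambda> a b :: "nat \<Rightarrow> complex"
  assumes U: "U \<in> carrier_mat m m" and c: "\<forall>k<m. c k \<in> carrier_vec m"
    and orth: "\<forall>k<m. \<forall>l<m. c k \<bullet>c c l = (if k = l then 1 else 0)"
    and act: "\<forall>l<m. U *\<^sub>v c l = \<Lambda> l \<cdot>\<^sub>v c l + b l \<cdot>\<^sub>v w"
    and w: "w = vec m (\<lambda>i. \<Sum>k<m. a k * c k $ i)"
  shows "det (z \<cdot>\<^sub>m 1\<^sub>m m - U) = det (mat m m (\<lambda>(k,l). (if k = l then z - \<Lambda> k else 0) - a k * b l))"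
proof (rule det_eq_if_orthonormal_basis_action[OF _ _ c orth])
  let ?M = "mat m m (\<lambda>(k,l). (if k = l then z - \<Lambda> k else 0) - a k * b l)"
  show "z \<cdot>\<^sub>m 1\<^sub>m m - U \<in> carrier_mat m m" "?M \<in> carrier_mat m m" using U by auto
  show "\<forall>l<m. (z \<cdot>\<^sub>m 1\<^sub>m m - U) *\<^sub>v c l = vec m (\<lambda>i. \<Sum>k<m. ?M $$ (k,l) * c k $ i)"
  proof (intro allI impI eq_vecI)
    fix l i assume l: "l < m" and "i < dim_vec (vec m (\<lambda>i. \<Sum>k<m. ?M $$ (k,l) * c k $ i))"
    hence i: "i < m" by simp
    have cl: "c l \<in> carrier_vec m" using c l by simp
    have "((z \<cdot>\<^sub>m 1\<^sub>m m - U) *\<^sub>v c l) $ i = z * c l $ i - (U *\<^sub>v c l) $ i"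
      by (rule index_char_mat_mult_vec[OF U cl i])
    also have "(U *\<^sub>v c l) $ i = \<Lambda> l * c l $ i + b l * (\<Sum>k<m. a k * c k $ i)"
      using act l i cl w by simp
    also have "z * c l $ i - (\<Lambda> l * c l $ i + b l * (\<Sum>k<m. a k * c k $ i))
        = (z - \<Lambda> l) * c l $ i - b l * (\<Sum>k<m. a k * c k $ i)"
      by (simp add: algebra_simps)
    also have "\<dots> = (\<Sum>k<m. (if k = l then (z - \<Lambda> l) * c l $ i else 0) - b l * (a k * c k $ i))"
      using l by (simp add: sum_subtractf sum_distrib_left)
    also have "\<dots> = (\<Sum>k<m. ?M $$ (k,l) * c k $ i)"
      by (rule sum.cong) (use l in \<open>auto simp: algebra_simps\<close>)
    finally show "((z \<cdot>\<^sub>m 1\<^sub>m m - U) *\<^sub>v c l) $ i = vec m (\<lambda>i. \<Sum>k<m. ?M $$ (k,l) * c k $ i) $ i"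
      using i by simp
  qed (use U in simp)
qed

lemma det_diagonal:
  "det (mat n n (\<lambda>(k,l). if k = l then d k else 0)) = (\<Prod>k<n. d k)"
  by (subst det_upper_triangular[of _ n])
     (auto simp: upper_triangular_def prod_list_diag_prod atLeast0LessThan)

lemma det_char_mat_of_orthonormal_eigenbasis:
  fixes V :: "complex mat" and f :: "nat \<Rightarrow> complex vec"
  assumes V: "V \<in> carrier_mat n n" and f: "\<forall>k<n. f k \<in> carrier_vec n"
    and orth: "\<forall>k<n. \<forall>l<n. f k \<bullet>c f l = (if k = l then 1 else 0)"
    and eig: "\<forall>k<n. V *\<^sub>v f k = lam k \<cdot>\<^sub>v f k"
  shows "det (z \<cdot>\<^sub>m 1\<^sub>m n - V) = (\<Prod>k<n. z - lam k)"
proof -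
  have "det (z \<cdot>\<^sub>m 1\<^sub>m n - V) = det (mat n n (\<lambda>(k,l). (if k = l then z - lam k else 0) - 0 * 0))"
    by (rule det_char_mat_of_orthonormal_basis[OF V f orth _ refl])
       (use eig f in \<open>auto intro!: eq_vecI\<close>)
  also have "\<dots> = (\<Prod>k<n. z - lam k)" using det_diagonal[of n "\<lambda>k. z - lam k"] by simp
  finally show ?thesis .
qed

lemma det_unit_lower_triangular:
  assumes A: "A \<in> carrier_mat m m"
    and lower: "\<And>i j. i < j \<Longrightarrow> j < m \<Longrightarrow> A $$ (i,j) = 0" and diag: "\<And>i. i < m \<Longrightarrow> A $$ (i,i) = 1"
  shows "det A = 1"
  using A diag by (simp add: det_lower_triangular[OF lower A] prod_list_diag_prod)

lemma det_arrowhead: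
  fixes d c r :: "nat \<Rightarrow> 'a :: field"
  assumes d: "\<forall>k<n. d k \<noteq> 0"
  shows "det (mat (n+1) (n+1) (\<lambda>(i,j). if i < n \<and> j < n then (if i = j then d i else 0)
             else if i < n then c i else if j < n then r j else \<delta>))
    = (\<Prod>k<n. d k) * (\<delta> - (\<Sum>k<n. r k * c k / d k))"
    (is "det ?A = _")
proof -
  define L where "L = mat (n+1) (n+1) (\<lambda>(i,j). if i = j then 1 else if i = n \<and> j < n then - r j / d j else 0)"
  define T where "T = mat (n+1) (n+1) (\<lambda>(i,j). if i < n then ?A $$ (i,j)
      else if j < n then 0 else \<delta> - (\<Sum>k<n. r k * c k / d k))"
  have A: "?A \<in> carrier_mat (n+1) (n+1)" and L: "L \<in> carrier_mat (n+1) (n+1)"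
    and T: "T \<in> carrier_mat (n+1) (n+1)" by (simp_all add: L_def T_def)
  have "L * ?A = T"
  proof (rule eq_matI)
    fix i l assume "i < dim_row T" "l < dim_col T"
    hence i: "i < n+1" and l: "l < n+1" by (auto simp: T_def)
    have LA: "(L * ?A) $$ (i,l) = (\<Sum>k<n. L $$ (i,k) * ?A $$ (k,l)) + L $$ (i,n) * ?A $$ (n,l)"
      using index_mult_mat_sum[OF L A i l] by simp
    show "(L * ?A) $$ (i,l) = T $$ (i,l)"
    proof (cases "i < n")
      case True
      have "(\<Sum>k<n. L $$ (i,k) * ?A $$ (k,l)) = (\<Sum>k<n. if k = i then ?A $$ (i,l) else 0)"
        by (rule sum.cong) (use True in \<open>auto simp: L_def\<close>)
      hence "(\<Sum>k<n. L $$ (i,k) * ?A $$ (k,l)) = ?A $$ (i,l)" using True by simp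
      thus ?thesis using LA True l by (simp add: L_def T_def)
    next
      case False
      hence "i = n" using i by simp
      moreover have "(\<Sum>k<n. L $$ (n,k) * ?A $$ (k,l))
          = (if l < n then - r l else - (\<Sum>k<n. r k * c k / d k))"
      proof (cases "l < n")
        case True
        have "(\<Sum>k<n. L $$ (n,k) * ?A $$ (k,l)) = (\<Sum>k<n. if k = l then - r l else 0)"
          by (rule sum.cong) (use True d in \<open>auto simp: L_def\<close>)
        thus ?thesis using True by simp
      next
        case False
        hence "l = n" using l by simp
        hence "(\<Sum>k<n. L $$ (n,k) * ?A $$ (k,l)) = (\<Sum>k<n. - (r k * c k / d k))"
          by (intro sum.cong) (auto simp: L_def)
        thus ?thesis using False by (simp add: sum_negf)
      qed
      ultimately show ?thesis using LA l by (auto simp: L_def T_def)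
    qed
  qed (simp_all add: L_def T_def)
  moreover have "det L = 1"
    by (rule det_unit_lower_triangular[OF L]) (auto simp: L_def)
  moreover have "det T = (\<Prod>k<n. d k) * (\<delta> - (\<Sum>k<n. r k * c k / d k))"
    by (subst det_upper_triangular[OF _ T])
       (auto simp: upper_triangular_def T_def prod_list_diag_prod atLeast0LessThan)
  ultimately show ?thesis using det_mult[OF L A] by simp
qed

lemma det_diagonal_minus_rank_one:
  fixes d a b :: "nat \<Rightarrow> 'a :: field"
  assumes d: "\<forall>k<n. d k \<noteq> 0" and b: "b n = 1"
  shows "det (mat (n+1) (n+1) (\<lambda>(k,l). (if k = l then d k else 0) - a k * b l)) =
    (\<Prod>k<n. d k) * (d n - a n - d n * (\<Sum>k<n. a k * b k / d k))"
    (is "det ?M = _")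
proof -
  define C where "C = mat (n+1) (n+1) (\<lambda>(i,j). if i = j then 1 else if i = n \<and> j < n then - b j else 0)"
  have M: "?M \<in> carrier_mat (n+1) (n+1)" and C: "C \<in> carrier_mat (n+1) (n+1)"
    by (simp_all add: C_def)
  txt \<open>\<open>d n\<close> may vanish, so the matrix determinant lemma does not apply; instead, subtracting
    multiples of the last column (where \<open>b n = 1\<close>) leaves an arrowhead matrix.\<close>
  have "?M * C = mat (n+1) (n+1) (\<lambda>(i,j). if i < n \<and> j < n then (if i = j then d i else 0)
      else if i < n then - a i else if j < n then - (d n * b j) else d n - a n)" (is "_ = ?R")
  proof (rule eq_matI)
    fix k l assume "k < dim_row ?R" "l < dim_col ?R"
    hence k: "k < n+1" and l: "l < n+1" by auto
    have "(?M * C) $$ (k,l) = (\<Sum>j<n. ?M $$ (k,j) * C $$ (j,l)) + ?M $$ (k,n) * C $$ (n,l)"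
      using index_mult_mat_sum[OF M C k l] by simp
    also have "(\<Sum>j<n. ?M $$ (k,j) * C $$ (j,l)) = (\<Sum>j<n. if j = l then ?M $$ (k,l) else 0)"
      by (rule sum.cong) (use l in \<open>auto simp: C_def\<close>)
    also have "(\<Sum>j<n. if j = l then ?M $$ (k,l) else 0) + ?M $$ (k,n) * C $$ (n,l) = ?R $$ (k,l)"
      using k l b by (cases "l < n") (auto simp: C_def algebra_simps less_Suc_eq)
    finally show "(?M * C) $$ (k,l) = ?R $$ (k,l)" .
  qed (simp_all add: C_def)
  moreover have "det C = 1"
    by (rule det_unit_lower_triangular[OF C]) (auto simp: C_def)
  moreover have "(\<Sum>k<n. - (d n * b k) * - a k / d k) = d n * (\<Sum>k<n. a k * b k / d k)"
    by (simp add: sum_distrib_left mult_ac)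
  ultimately show ?thesis
    using det_mult[OF M C] det_arrowhead[OF d, of "\<lambda>k. - a k" "\<lambda>j. - (d n * b j)" "d n - a n"]
    by (simp add: algebra_simps)
qed

lemma sum_lessThan_if_less:
  assumes "(n::nat) \<le> N"
  shows "(\<Sum>j<N. if j < n then f j else 0) = (\<Sum>j<n. f j)"
proof -
  have "{..<N} \<inter> {j. j < n} = {..<n}" using assms by auto
  thus ?thesis by (simp add: sum.If_cases)
qed

lemma dim_emb_mat [simp]: "dim_row (emb_mat N A) = N" "dim_col (emb_mat N A) = N"
  by (simp_all add: emb_mat_def)

lemma emb_mat_carrier [simp]: "emb_mat N A \<in> carrier_mat N N"
  by (rule carrier_matI) simp_all

lemma dim_emb_vec [simp]: "dim_vec (emb_vec N v) = N"
  by (simp add: emb_vec_def)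

lemma emb_vec_carrier [simp]: "emb_vec N v \<in> carrier_vec N"
  by (rule carrier_vecI) simp

lemma emb_vec_last:
  "v \<in> carrier_vec n \<Longrightarrow> emb_vec (n+1) v $ n = 0"
  by (simp add: emb_vec_def)

lemma emb_vec_smult: "emb_vec N (k \<cdot>\<^sub>v v) = k \<cdot>\<^sub>v emb_vec N v"
  by (rule eq_vecI) (auto simp: emb_vec_def)

lemma cscalar_prod_emb_vec:
  fixes x y :: "complex vec"
  assumes x: "x \<in> carrier_vec n" and y: "y \<in> carrier_vec n" and nN: "n \<le> N"
  shows "emb_vec N x \<bullet>c emb_vec N y = x \<bullet>c y"
proof -
  have "emb_vec N x \<bullet>c emb_vec N y = (\<Sum>i<N. if i < n then x $ i * cnj (y $ i) else 0)"
    unfolding cscalar_prod_sum[OF emb_vec_carrier]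
    by (rule sum.cong) (use x y in \<open>auto simp: emb_vec_def\<close>)
  also have "\<dots> = x \<bullet>c y" by (simp add: sum_lessThan_if_less[OF nN] cscalar_prod_sum[OF y])
  finally show ?thesis .
qed

lemma emb_mat_mult_emb_vec:
  assumes A: "A \<in> carrier_mat n n" and v: "v \<in> carrier_vec n" and nN: "n \<le> N"
  shows "emb_mat N A *\<^sub>v emb_vec N v = emb_vec N (A *\<^sub>v v)"
proof (rule eq_vecI)
  fix i assume "i < dim_vec (emb_vec N (A *\<^sub>v v))"
  hence i: "i < N" by (simp add: emb_vec_def)
  have "(emb_mat N A *\<^sub>v emb_vec N v) $ i
      = (\<Sum>j<N. if j < n then (if i < n then A $$ (i,j) * v $ j else 0) else 0)"
    unfolding index_mult_mat_vec_sum[OF emb_mat_carrier emb_vec_carrier i]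
    by (rule sum.cong) (use A v i in \<open>auto simp: emb_mat_def emb_vec_def\<close>)
  also have "\<dots> = emb_vec N (A *\<^sub>v v) $ i"
    using i A v by (auto simp: sum_lessThan_if_less[OF nN] emb_vec_def index_mult_mat_vec_sum[OF A v]
        simp del: index_mult_mat_vec)
  finally show "(emb_mat N A *\<^sub>v emb_vec N v) $ i = emb_vec N (A *\<^sub>v v) $ i" .
qed (simp add: emb_mat_def emb_vec_def)

lemma emb_mat_mult_vec_last:
  assumes v: "v \<in> carrier_mat n n" and a: "a \<in> carrier_vec (n+1)"
  shows "(emb_mat (n+1) v *\<^sub>v a) $ n = a $ n"
proof -
  have "(emb_mat (n+1) v *\<^sub>v a) $ n = (\<Sum>j<n+1. if j = n then a $ n else 0)"
    unfolding index_mult_mat_vec_sum[OF emb_mat_carrier a less_add_one]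
    by (rule sum.cong) (use v in \<open>auto simp: emb_mat_def\<close>)
  thus ?thesis by simp
qed

lemma emb_mat_eqI:
  assumes A: "A \<in> carrier_mat n n" and B: "B \<in> carrier_mat n n" and nN: "n \<le> N"
    and eq: "\<And>a. a \<in> carrier_vec N \<Longrightarrow> emb_mat N A *\<^sub>v a = emb_mat N B *\<^sub>v a"
  shows "A = B"
proof (rule eq_matI)
  fix i j assume "i < dim_row B" "j < dim_col B"
  hence i: "i < N" "i < n" and j: "j < N" "j < n" using B nN by auto
  have "A $$ (i,j) = (emb_mat N A *\<^sub>v unit_vec N j) $ i" using A i j by (simp add: emb_mat_def)
  also have "\<dots> = (emb_mat N B *\<^sub>v unit_vec N j) $ i" by (simp add: eq)
  also have "\<dots> = B $$ (i,j)" using B i j by (simp add: emb_mat_def)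
  finally show "A $$ (i,j) = B $$ (i,j)" .
qed (use A B in auto)

section \<open>The projection from U(n+1) to U(n)\<close>

text \<open>The explicit formula for \<open>\<pi>\<^sub>n\<^sub>+\<^sub>1\<^sub>,\<^sub>n(U)\<close> when \<open>U $$ (n,n) \<noteq> 1\<close>: the unique matrix that fixes
  the last basis vector and differs from \<open>U\<close> by a rank-one map with range spanned by
  \<open>U e\<^sub>n\<^sub>+\<^sub>1 - e\<^sub>n\<^sub>+\<^sub>1\<close> (see \<open>proj_eq_proj_last\<close>).\<close>

definition proj_last :: "nat \<Rightarrow> complex mat \<Rightarrow> complex mat" where
  "proj_last n U = mat n n (\<lambda>(i,j). U $$ (i,j) - U $$ (i,n) * U $$ (n,j) / (U $$ (n,n) - 1))"

lemma proj_last_carrier [simp]: "proj_last n U \<in> carrier_mat n n"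
  by (simp add: proj_last_def)

lemma emb_mat_proj_last_mult_vec:
  assumes U: "U \<in> carrier_mat (n+1) (n+1)" and nu: "U $$ (n,n) \<noteq> 1"
    and a: "a \<in> carrier_vec (n+1)"
  shows "emb_mat (n+1) (proj_last n U) *\<^sub>v a =
    U *\<^sub>v a - (((U *\<^sub>v a) $ n - a $ n) / (U $$ (n,n) - 1)) \<cdot>\<^sub>v (col U n - unit_vec (n+1) n)"
proof (rule eq_vecI)
  let ?E = "emb_mat (n+1) (proj_last n U)"
  define p where "p = ((U *\<^sub>v a) $ n - a $ n) / (U $$ (n,n) - 1)"
  have Ua: "(U *\<^sub>v a) $ k = (\<Sum>j<n. U $$ (k,j) * a $ j) + U $$ (k,n) * a $ n" if "k < n+1" for k
    using index_mult_mat_vec_sum[OF U a that] by simp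
  fix i assume "i < dim_vec (U *\<^sub>v a - p \<cdot>\<^sub>v (col U n - unit_vec (n+1) n))"
  hence i: "i < n+1" using U by simp
  show "(?E *\<^sub>v a) $ i = (U *\<^sub>v a - p \<cdot>\<^sub>v (col U n - unit_vec (n+1) n)) $ i"
  proof (cases "i < n")
    case True
    have "(?E *\<^sub>v a) $ i = (\<Sum>j<n. (U $$ (i,j) - U $$ (i,n) * U $$ (n,j) / (U $$ (n,n) - 1)) * a $ j)"
      unfolding index_mult_mat_vec_sum[OF emb_mat_carrier a i]
      using True by (simp add: emb_mat_def proj_last_def)
    also have "\<dots> = (\<Sum>j<n. U $$ (i,j) * a $ j)
        - U $$ (i,n) / (U $$ (n,n) - 1) * (\<Sum>j<n. U $$ (n,j) * a $ j)"
      unfolding sum_distrib_left sum_subtractf[symmetric]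
      by (rule sum.cong) (simp_all add: left_diff_distrib)
    also have "\<dots> = (U *\<^sub>v a) $ i - p * U $$ (i,n)"
      using Ua[OF i] Ua[of n] nu by (simp add: p_def field_simps)
    finally show ?thesis using True U i by simp
  next
    case False
    hence "i = n" using i by simp
    thus ?thesis using emb_mat_mult_vec_last[OF proj_last_carrier a] U nu by (simp add: p_def)
  qed
qed (use U in \<open>simp add: emb_mat_def\<close>)

lemma cscalar_prod_emb_mat_proj_last:
  assumes U: "unitary_mat (n+1) U" and nu: "U $$ (n,n) \<noteq> 1"
    and a: "a \<in> carrier_vec (n+1)" and b: "b \<in> carrier_vec (n+1)"
  shows "(emb_mat (n+1) (proj_last n U) *\<^sub>v a) \<bullet>c (emb_mat (n+1) (proj_last n U) *\<^sub>v b) = a \<bullet>c b"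
proof -
  let ?e = "unit_vec (n+1) n :: complex vec" and ?\<nu> = "U $$ (n,n)"
  define w where "w = col U n - ?e"
  define p where "p v = ((U *\<^sub>v v) $ n - v $ n) / (?\<nu> - 1)" for v
  have UC: "U \<in> carrier_mat (n+1) (n+1)" using U by (simp add: unitary_mat_def)
  have x: "col U n = U *\<^sub>v ?e" by (rule col_eq_mult_unit_vec[OF UC]) simp
  have wC: "w \<in> carrier_vec (n+1)" using UC by (simp add: w_def x)
  have E: "emb_mat (n+1) (proj_last n U) *\<^sub>v v = U *\<^sub>v v - p v \<cdot>\<^sub>v w" if "v \<in> carrier_vec (n+1)" for v
    unfolding p_def w_def by (rule emb_mat_proj_last_mult_vec[OF UC nu that])
  have Uw: "(U *\<^sub>v v) \<bullet>c w = - ((?\<nu> - 1) * p v)" if v: "v \<in> carrier_vec (n+1)" for v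
  proof -
    have "(U *\<^sub>v v) \<bullet>c w = (U *\<^sub>v v) \<bullet>c (U *\<^sub>v ?e) - (U *\<^sub>v v) \<bullet>c ?e"
      unfolding w_def x by (rule cscalar_prod_minus_right[of _ "n+1"]) (use UC v in auto)
    also have "\<dots> = v $ n - (U *\<^sub>v v) $ n"
      using v UC by (simp add: unitary_mat_cscalar_prod[OF U] cscalar_prod_unit_vec_right)
    finally show ?thesis using nu by (simp add: p_def)
  qed
  have wU: "w \<bullet>c (U *\<^sub>v v) = - ((cnj ?\<nu> - 1) * cnj (p v))" if v: "v \<in> carrier_vec (n+1)" for v
    using cscalar_prod_swap[OF _ wC, of "U *\<^sub>v v"] Uw[OF v] UC v by simp
  have ww: "w \<bullet>c w = - (?\<nu> - 1) - (cnj ?\<nu> - 1)"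
  proof -
    have "w \<bullet>c w = (U *\<^sub>v ?e) \<bullet>c w - ?e \<bullet>c w"
      unfolding w_def x by (rule minus_scalar_prod_distrib[of _ "n+1"]) (use UC in \<open>auto simp: x[symmetric]\<close>)
    also have "?e \<bullet>c w = cnj (w $ n)"
      using cscalar_prod_swap[OF wC, of ?e] cscalar_prod_unit_vec_right[OF wC, of n] by simp
    finally show ?thesis using Uw[of ?e] nu UC by (simp add: p_def w_def)
  qed
  have "(emb_mat (n+1) (proj_last n U) *\<^sub>v a) \<bullet>c (emb_mat (n+1) (proj_last n U) *\<^sub>v b)
      = (U *\<^sub>v a) \<bullet>c (U *\<^sub>v b) - cnj (p b) * ((U *\<^sub>v a) \<bullet>c w) - p a * (w \<bullet>c (U *\<^sub>v b))
        + p a * cnj (p b) * (w \<bullet>c w)"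
    unfolding E[OF a] E[OF b] by (rule cscalar_prod_diff_smult) (use UC a b wC in auto)
  also have "\<dots> = a \<bullet>c b"
    unfolding Uw[OF a] wU[OF b] ww unitary_mat_cscalar_prod[OF U a b] by (simp add: algebra_simps)
  finally show ?thesis .
qed

lemma unitary_mat_proj_last:
  assumes U: "unitary_mat (n+1) U" and nu: "U $$ (n,n) \<noteq> 1"
  shows "unitary_mat n (proj_last n U)"
proof (rule unitary_mat_if_isometry[OF proj_last_carrier])
  let ?V = "proj_last n U" and ?E = "emb_mat (n+1) (proj_last n U)"
  fix a b :: "complex vec" assume a: "a \<in> carrier_vec n" and b: "b \<in> carrier_vec n"
  have "(?V *\<^sub>v a) \<bullet>c (?V *\<^sub>v b) = emb_vec (n+1) (?V *\<^sub>v a) \<bullet>c emb_vec (n+1) (?V *\<^sub>v b)"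
    by (rule cscalar_prod_emb_vec[symmetric, of _ n])
      (use a b mult_mat_vec_carrier[OF proj_last_carrier] in auto)
  also have "\<dots> = (?E *\<^sub>v emb_vec (n+1) a) \<bullet>c (?E *\<^sub>v emb_vec (n+1) b)"
    using emb_mat_mult_emb_vec[OF proj_last_carrier a] emb_mat_mult_emb_vec[OF proj_last_carrier b]
    by simp
  also have "\<dots> = emb_vec (n+1) a \<bullet>c emb_vec (n+1) b"
    by (rule cscalar_prod_emb_mat_proj_last[OF U nu]) auto
  also have "\<dots> = a \<bullet>c b" by (rule cscalar_prod_emb_vec[OF a b]) simp
  finally show "(?V *\<^sub>v a) \<bullet>c (?V *\<^sub>v b) = a \<bullet>c b" .
qed

lemma is_proj_proj_last:
  assumes U: "unitary_mat (n+1) U" and nu: "U $$ (n,n) \<noteq> 1"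
  shows "is_proj (n+1) n U (proj_last n U)"
  unfolding is_proj_def
proof (intro conjI ballI unitary_mat_proj_last[OF U nu])
  let ?e = "unit_vec (n+1) n :: complex vec"
  fix a :: "complex vec" assume a: "a \<in> carrier_vec (n+1)"
  define p where "p = ((U *\<^sub>v a) $ n - a $ n) / (U $$ (n,n) - 1)"
  have UC: "U \<in> carrier_mat (n+1) (n+1)" using U by (simp add: unitary_mat_def)
  have "(U - emb_mat (n+1) (proj_last n U)) *\<^sub>v a = U *\<^sub>v a - emb_mat (n+1) (proj_last n U) *\<^sub>v a"
    by (rule minus_mult_distrib_mat_vec[OF UC emb_mat_carrier a])
  also have "\<dots> = p \<cdot>\<^sub>v (col U n - ?e)"
    unfolding emb_mat_proj_last_mult_vec[OF UC nu a] p_def[symmetric]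
    by (rule eq_vecI) (use UC in simp_all)
  also have "col U n - ?e = (U - 1\<^sub>m (n+1)) *\<^sub>v ?e"
    unfolding minus_mult_distrib_mat_vec[OF UC one_carrier_mat unit_vec_carrier]
    by (simp add: col_eq_mult_unit_vec[OF UC])
  also have "p \<cdot>\<^sub>v ((U - 1\<^sub>m (n+1)) *\<^sub>v ?e) = (U - 1\<^sub>m (n+1)) *\<^sub>v (p \<cdot>\<^sub>v ?e)"
    by (rule mult_mat_vec[symmetric]) (use UC in auto)
  finally show "\<exists>y \<in> carrier_vec (n+1). (\<forall>i<n. y $ i = 0) \<and>
      (U - emb_mat (n+1) (proj_last n U)) *\<^sub>v a = (U - 1\<^sub>m (n+1)) *\<^sub>v y"
    by (intro bexI[of _ "p \<cdot>\<^sub>v ?e"]) auto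
qed

lemma is_proj_imp_eq_proj_last:
  assumes U: "U \<in> carrier_mat (n+1) (n+1)" and nu: "U $$ (n,n) \<noteq> 1"
    and proj: "is_proj (n+1) n U v"
  shows "v = proj_last n U"
proof (rule emb_mat_eqI[where N="n+1"])
  let ?e = "unit_vec (n+1) n :: complex vec" and ?E = "emb_mat (n+1) v"
  show vC: "v \<in> carrier_mat n n" using proj by (simp add: is_proj_def unitary_mat_def)
  fix a :: "complex vec" assume a: "a \<in> carrier_vec (n+1)"
  obtain y where yC: "y \<in> carrier_vec (n+1)" and y0: "\<forall>i<n. y $ i = 0"
    and yeq: "(U - ?E) *\<^sub>v a = (U - 1\<^sub>m (n+1)) *\<^sub>v y"
    using proj a unfolding is_proj_def by blast
  have Uy: "((U - 1\<^sub>m (n+1)) *\<^sub>v y) $ i = y $ n * (col U n - ?e) $ i" if i: "i < n+1" for i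
  proof -
    have "((U - 1\<^sub>m (n+1)) *\<^sub>v y) $ i = (\<Sum>j<n+1. if j = n then (U $$ (i,n) - ?e $ i) * y $ n else 0)"
      unfolding index_mult_mat_vec_sum[OF minus_carrier_mat[OF one_carrier_mat] yC i]
      by (rule sum.cong) (use U i y0 in \<open>auto simp: less_Suc_eq\<close>)
    thus ?thesis using U i by simp
  qed
  have EUa: "?E *\<^sub>v a = U *\<^sub>v a - y $ n \<cdot>\<^sub>v (col U n - ?e)"
  proof (rule eq_vecI)
    fix i assume "i < dim_vec (U *\<^sub>v a - y $ n \<cdot>\<^sub>v (col U n - ?e))"
    hence i: "i < n+1" using U by simp
    have "(?E *\<^sub>v a) $ i = (U *\<^sub>v a) $ i - ((U - ?E) *\<^sub>v a) $ i"
      unfolding minus_mult_distrib_mat_vec[OF U emb_mat_carrier a] using i U by simp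
    also have "((U - ?E) *\<^sub>v a) $ i = y $ n * (col U n - ?e) $ i"
      unfolding yeq by (rule Uy[OF i])
    finally show "(?E *\<^sub>v a) $ i = (U *\<^sub>v a - y $ n \<cdot>\<^sub>v (col U n - ?e)) $ i"
      using i U by simp
  qed (use U in \<open>simp add: emb_mat_def\<close>)
  have "(U *\<^sub>v a) $ n - y $ n * (U $$ (n,n) - 1) = a $ n"
    using arg_cong[OF EUa, of "\<lambda>v. v $ n"] emb_mat_mult_vec_last[OF vC a] U by simp
  hence "y $ n = ((U *\<^sub>v a) $ n - a $ n) / (U $$ (n,n) - 1)" using nu by (auto simp: field_simps)
  thus "?E *\<^sub>v a = emb_mat (n+1) (proj_last n U) *\<^sub>v a"
    unfolding EUa emb_mat_proj_last_mult_vec[OF U nu a] by simp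
qed simp_all

lemma proj_eq_proj_last:
  assumes U: "unitary_mat (n+1) U" and nu: "U $$ (n,n) \<noteq> 1"
  shows "proj (n+1) n U = proj_last n U"
  unfolding proj_def
proof (rule the_equality)
  show "is_proj (n+1) n U (proj_last n U)" by (rule is_proj_proj_last[OF U nu])
  fix v assume "is_proj (n+1) n U v"
  thus "v = proj_last n U" by (rule is_proj_imp_eq_proj_last[rotated 2]) (use U nu in \<open>auto simp: unitary_mat_def\<close>)
qed

section \<open>The characteristic polynomial after one step\<close>

lemma cnj_diff_one_neq_zero: "(z :: complex) \<noteq> 1 \<Longrightarrow> cnj z - 1 \<noteq> 0"
  by (metis complex_cnj_one eq_iff_diff_eq_0 complex_cnj_cancel_iff)

lemma mult_emb_vec_eigenvector_proj_last:
  assumes U: "U \<in> carrier_mat (n+1) (n+1)" and nu: "U $$ (n,n) \<noteq> 1"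
    and f: "f \<in> carrier_vec n" and eig: "proj_last n U *\<^sub>v f = lam \<cdot>\<^sub>v f"
  shows "U *\<^sub>v emb_vec (n+1) f = lam \<cdot>\<^sub>v emb_vec (n+1) f
    + ((U *\<^sub>v emb_vec (n+1) f) $ n / (U $$ (n,n) - 1)) \<cdot>\<^sub>v (col U n - unit_vec (n+1) n)"
    (is "_ = _ + ?T \<cdot>\<^sub>v ?w")
proof -
  let ?f = "emb_vec (n+1) f"
  have wC: "?w \<in> carrier_vec (n+1)" using U by (simp add: col_eq_mult_unit_vec[OF U])
  have "lam \<cdot>\<^sub>v ?f = emb_mat (n+1) (proj_last n U) *\<^sub>v ?f"
    using emb_mat_mult_emb_vec[OF proj_last_carrier f] eig by (simp add: emb_vec_smult)
  also have "\<dots> = U *\<^sub>v ?f - ?T \<cdot>\<^sub>v ?w"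
    using emb_mat_proj_last_mult_vec[OF U nu emb_vec_carrier] emb_vec_last[OF f] by simp
  finally have Uf: "lam \<cdot>\<^sub>v ?f = U *\<^sub>v ?f - ?T \<cdot>\<^sub>v ?w" .
  show ?thesis
  proof (rule eq_vecI)
    fix i assume "i < dim_vec (lam \<cdot>\<^sub>v ?f + ?T \<cdot>\<^sub>v ?w)"
    hence i: "i < n+1" using wC by simp
    have "lam * ?f $ i = (U *\<^sub>v ?f) $ i - ?T * ?w $ i"
      using arg_cong[OF Uf, of "\<lambda>v. v $ i"] i U wC by simp
    thus "(U *\<^sub>v ?f) $ i = (lam \<cdot>\<^sub>v ?f + ?T \<cdot>\<^sub>v ?w) $ i" using i wC by simp
  qed (use U wC in simp)
qed

lemma unitary_mult_coeff_along_last_col: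
  assumes U: "unitary_mat (n+1) U" and v: "v \<in> carrier_vec (n+1)" and vn: "v $ n = 0"
    and Uv: "U *\<^sub>v v = lam \<cdot>\<^sub>v v + T \<cdot>\<^sub>v (col U n - unit_vec (n+1) n)"
  shows "T * (cnj (U $$ (n,n)) - 1) = lam * cnj (col U n \<bullet>c v)"
proof -
  let ?e = "unit_vec (n+1) n :: complex vec" and ?x = "col U n"
  have UC: "U \<in> carrier_mat (n+1) (n+1)" using U by (simp add: unitary_mat_def)
  have Ue: "U *\<^sub>v ?e = ?x" by (rule col_eq_mult_unit_vec[OF UC, symmetric]) simp
  have xC: "?x \<in> carrier_vec (n+1)" using UC by (simp flip: Ue)
  have wC: "?x - ?e \<in> carrier_vec (n+1)" using xC by simp
  have "0 = v \<bullet>c ?e" using v vn by (simp add: cscalar_prod_unit_vec_right)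
  also have "\<dots> = (U *\<^sub>v v) \<bullet>c ?x"
    unfolding Ue[symmetric] by (rule unitary_mat_cscalar_prod[OF U v, symmetric]) simp
  also have "\<dots> = lam * (v \<bullet>c ?x) + T * ((?x - ?e) \<bullet>c ?x)"
    unfolding Uv using v xC wC
    by (simp add: add_scalar_prod_distrib[of _ "n+1"] smult_scalar_prod_distrib[of _ "n+1"])
  also have "v \<bullet>c ?x = cnj (?x \<bullet>c v)" by (rule cscalar_prod_swap[OF xC v])
  also have "(?x - ?e) \<bullet>c ?x = (U *\<^sub>v ?e) \<bullet>c (U *\<^sub>v ?e) - ?e \<bullet>c ?x"
    unfolding Ue by (rule minus_scalar_prod_distrib[of _ "n+1"]) (use xC in auto)
  also have "\<dots> = 1 - cnj (U $$ (n,n))"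
    using cscalar_prod_swap[OF xC, of ?e] cscalar_prod_unit_vec_right[OF xC, of n] UC
    by (simp add: unitary_mat_cscalar_prod[OF U] cscalar_prod_unit_vec_unit_vec)
  finally show ?thesis by (simp add: algebra_simps)
qed

definition ext_basis :: "nat \<Rightarrow> (nat \<Rightarrow> complex vec) \<Rightarrow> nat \<Rightarrow> complex vec" where
  "ext_basis n f k = (if k < n then emb_vec (n+1) (f k) else unit_vec (n+1) n)"

lemma ext_basis_carrier [simp]: "ext_basis n f k \<in> carrier_vec (n+1)"
  by (simp add: ext_basis_def)

lemma ext_basis_orthonormal:
  assumes f: "\<forall>k<n. f k \<in> carrier_vec n"
    and orth: "\<forall>k<n. \<forall>l<n. f k \<bullet>c f l = (if k = l then 1 else 0)"
  shows "\<forall>k<n+1. \<forall>l<n+1. ext_basis n f k \<bullet>c ext_basis n f l = (if k = l then 1 else 0)"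
proof (intro allI impI)
  fix k l assume k: "k < n+1" and l: "l < n+1"
  have emb_e: "emb_vec (n+1) (f j) \<bullet>c unit_vec (n+1) n = 0" if "j < n" for j
    using cscalar_prod_unit_vec_right[of _ "n+1" n] emb_vec_last f that by simp
  have e_emb: "unit_vec (n+1) n \<bullet>c emb_vec (n+1) (f j) = 0" if "j < n" for j
    using cscalar_prod_swap[of "emb_vec (n+1) (f j)" "n+1" "unit_vec (n+1) n"] emb_e[OF that] by simp
  show "ext_basis n f k \<bullet>c ext_basis n f l = (if k = l then 1 else 0)"
    using k l f orth emb_e e_emb cscalar_prod_emb_vec[of "f k" n "f l" "n+1"]
    by (auto simp: ext_basis_def cscalar_prod_unit_vec_unit_vec less_Suc_eq)
qed

lemma cscalar_prod_diff_unit_vec_ext_basis: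
  assumes f: "\<forall>k<n. f k \<in> carrier_vec n"
    and orth: "\<forall>k<n. \<forall>l<n. f k \<bullet>c f l = (if k = l then 1 else 0)"
    and x: "x \<in> carrier_vec (n+1)" and k: "k < n+1"
  shows "(x - unit_vec (n+1) n) \<bullet>c ext_basis n f k = (if k < n then x \<bullet>c ext_basis n f k else x $ n - 1)"
proof -
  have "(x - unit_vec (n+1) n) \<bullet>c ext_basis n f k = x \<bullet>c ext_basis n f k - unit_vec (n+1) n \<bullet>c ext_basis n f k"
    by (rule minus_scalar_prod_distrib[OF x]) (use ext_basis_carrier[of n f k] in simp_all)
  also have "unit_vec (n+1) n = ext_basis n f n" by (simp add: ext_basis_def)
  finally show ?thesis
    using ext_basis_orthonormal[OF f orth] k x
    by (auto simp: ext_basis_def cscalar_prod_unit_vec_right less_Suc_eq)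
qed

lemma unitary_mult_ext_basis:
  assumes U: "unitary_mat (n+1) U" and nu: "U $$ (n,n) \<noteq> 1"
    and f: "\<forall>k<n. f k \<in> carrier_vec n" and eig: "\<forall>k<n. proj_last n U *\<^sub>v f k = lam k \<cdot>\<^sub>v f k"
    and l: "l < n+1"
  shows "U *\<^sub>v ext_basis n f l = (if l < n then lam l else 1) \<cdot>\<^sub>v ext_basis n f l
    + (if l < n then lam l * cnj (col U n \<bullet>c ext_basis n f l) / (cnj (U $$ (n,n)) - 1) else 1)
      \<cdot>\<^sub>v (col U n - unit_vec (n+1) n)"
proof (cases "l < n")
  case True
  have UC: "U \<in> carrier_mat (n+1) (n+1)" using U by (simp add: unitary_mat_def)
  let ?T = "(U *\<^sub>v ext_basis n f l) $ n / (U $$ (n,n) - 1)"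
  have Uf: "U *\<^sub>v ext_basis n f l = lam l \<cdot>\<^sub>v ext_basis n f l + ?T \<cdot>\<^sub>v (col U n - unit_vec (n+1) n)"
    using mult_emb_vec_eigenvector_proj_last[OF UC nu, of "f l" "lam l"] f eig True
    by (simp add: ext_basis_def)
  have "?T * (cnj (U $$ (n,n)) - 1) = lam l * cnj (col U n \<bullet>c ext_basis n f l)"
    by (rule unitary_mult_coeff_along_last_col[OF U ext_basis_carrier _ Uf])
       (use True f emb_vec_last in \<open>simp add: ext_basis_def\<close>)
  hence "?T = lam l * cnj (col U n \<bullet>c ext_basis n f l) / (cnj (U $$ (n,n)) - 1)"
    using cnj_diff_one_neq_zero[OF nu] by (simp add: eq_divide_eq)
  thus ?thesis using Uf True by simp
next
  case False
  hence "l = n" using l by simp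
  moreover have UC: "U \<in> carrier_mat (n+1) (n+1)" using U by (simp add: unitary_mat_def)
  moreover have "U *\<^sub>v unit_vec (n+1) n = col U n" by (rule col_eq_mult_unit_vec[OF UC, symmetric]) simp
  ultimately show ?thesis by (auto simp: ext_basis_def intro!: eq_vecI)
qed

lemma det_char_mat_via_proj_last:
  fixes U :: "complex mat" and f :: "nat \<Rightarrow> complex vec" and lam :: "nat \<Rightarrow> complex"
  assumes U: "unitary_mat (n+1) U" and nu: "U $$ (n,n) \<noteq> 1"
    and f: "\<forall>k<n. f k \<in> carrier_vec n"
    and orth: "\<forall>k<n. \<forall>l<n. f k \<bullet>c f l = (if k = l then 1 else 0)"
    and eig: "\<forall>k<n. proj_last n U *\<^sub>v f k = lam k \<cdot>\<^sub>v f k"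
    and z: "z \<notin> lam ` {..<n}"
  shows "det (z \<cdot>\<^sub>m 1\<^sub>m (n+1) - U) = (\<Prod>k<n. z - lam k) *
    (z - U $$ (n,n) - (z - 1) / (cnj (U $$ (n,n)) - 1) *
      (\<Sum>k<n. (complex_of_real (cmod (col U n \<bullet>c ext_basis n f k)))\<^sup>2 * lam k / (z - lam k)))"
proof -
  let ?c = "ext_basis n f" and ?\<nu> = "U $$ (n,n)" and ?x = "col U n"
  define w where "w = ?x - unit_vec (n+1) n"
  define \<Lambda> where "\<Lambda> k = (if k < n then lam k else 1)" for k
  define b where "b k = (if k < n then lam k * cnj (?x \<bullet>c ?c k) / (cnj ?\<nu> - 1) else 1)" for k
  define a where "a k = w \<bullet>c ?c k" for k
  have UC: "U \<in> carrier_mat (n+1) (n+1)" using U by (simp add: unitary_mat_def)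
  have xC: "?x \<in> carrier_vec (n+1)" by (rule col_carrier_vec[OF _ UC]) simp
  have wC: "w \<in> carrier_vec (n+1)" using xC by (simp add: w_def)
  have c: "\<forall>k<n+1. ?c k \<in> carrier_vec (n+1)" using ext_basis_carrier by blast
  note orth_c = ext_basis_orthonormal[OF f orth]
  have "det (z \<cdot>\<^sub>m 1\<^sub>m (n+1) - U) = det (mat (n+1) (n+1) (\<lambda>(k,l). (if k = l then z - \<Lambda> k else 0) - a k * b l))"
  proof (rule det_char_mat_of_orthonormal_basis[OF UC c orth_c])
    show "\<forall>l<n+1. U *\<^sub>v ?c l = \<Lambda> l \<cdot>\<^sub>v ?c l + b l \<cdot>\<^sub>v w"
      using unitary_mult_ext_basis[OF U nu f eig] by (simp add: \<Lambda>_def b_def w_def)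
    show "w = vec (n+1) (\<lambda>i. \<Sum>k<n+1. a k * ?c k $ i)"
      unfolding a_def by (rule orthonormal_basis_expansion[OF c orth_c wC])
  qed
  also have "\<dots> = (\<Prod>k<n. z - \<Lambda> k) * (z - \<Lambda> n - a n - (z - \<Lambda> n) * (\<Sum>k<n. a k * b k / (z - \<Lambda> k)))"
    by (rule det_diagonal_minus_rank_one) (use z in \<open>auto simp: \<Lambda>_def b_def\<close>)
  also have "(\<Sum>k<n. a k * b k / (z - \<Lambda> k))
      = (\<Sum>k<n. (complex_of_real (cmod (?x \<bullet>c ?c k)))\<^sup>2 * lam k / (z - lam k)) / (cnj ?\<nu> - 1)"
    unfolding sum_divide_distrib
  proof (rule sum.cong[OF refl])
    fix k assume "k \<in> {..<n}"
    moreover have "(complex_of_real (cmod (?x \<bullet>c ?c k)))\<^sup>2 = (?x \<bullet>c ?c k) * cnj (?x \<bullet>c ?c k)"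
      using complex_norm_square[of "?x \<bullet>c ?c k"] by simp
    ultimately show "a k * b k / (z - \<Lambda> k)
        = (complex_of_real (cmod (?x \<bullet>c ?c k)))\<^sup>2 * lam k / (z - lam k) / (cnj ?\<nu> - 1)"
      using cscalar_prod_diff_unit_vec_ext_basis[OF f orth xC, of k]
      by (simp add: a_def b_def \<Lambda>_def w_def mult_ac)
  qed
  also have "a n = ?\<nu> - 1"
    using cscalar_prod_diff_unit_vec_ext_basis[OF f orth xC, of n] UC by (simp add: a_def w_def)
  finally show ?thesis by (simp add: \<Lambda>_def algebra_simps)
qed

lemma virtual_isometry_proj_eq_proj_last:
  assumes vi: "virtual_isometry u" and n1: "n \<ge> 1"
    and ne: "col (u (n+1)) n \<noteq> unit_vec (n+1) n"
  shows "u (n+1) $$ (n,n) \<noteq> 1" and "u n = proj_last n (u (n+1))"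
proof -
  have U: "unitary_mat (n+1) (u (n+1))" using vi n1 by (simp add: virtual_isometry_def)
  show nu: "u (n+1) $$ (n,n) \<noteq> 1" using unitary_mat_col_eq_unit_vec[OF U] ne by blast
  show "u n = proj_last n (u (n+1))"
    using vi n1 proj_eq_proj_last[OF U nu] by (simp add: virtual_isometry_def)
qed

theorem proposition4p4:
  fixes u :: "nat \<Rightarrow> complex mat" and n :: nat
    and f :: "nat \<Rightarrow> complex vec" and lam mu :: "nat \<Rightarrow> complex" and nu :: complex
  assumes vi: "virtual_isometry u"
    and n1: "n \<ge> 1"
    and f_carrier: "\<forall>k<n. f k \<in> carrier_vec n"
    and f_orthonormal: "\<forall>k<n. \<forall>l<n. f k \<bullet>c f l = (if k = l then 1 else 0)"
    and f_eigen: "\<forall>k<n. u n *\<^sub>v f k = lam k \<cdot>\<^sub>v f k"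
    and decomp: "u (n+1) *\<^sub>v unit_vec (n+1) n =
                   vec (n+1) (\<lambda>i. (\<Sum>k<n. mu k * emb_vec (n+1) (f k) $ i)
                                   + nu * unit_vec (n+1) n $ i)"
    and x_ne: "u (n+1) *\<^sub>v unit_vec (n+1) n \<noteq> unit_vec (n+1) n"
  shows "nu \<noteq> 1 \<and>
    (\<forall>z. z \<notin> lam ` {..<n} \<longrightarrow>
       det (z \<cdot>\<^sub>m 1\<^sub>m (n+1) - u (n+1)) =
         det (z \<cdot>\<^sub>m 1\<^sub>m n - u n) / (cnj nu - 1) *
         ((z - nu) * (cnj nu - 1)
          - (z - 1) * (\<Sum>k<n. (complex_of_real (cmod (mu k)))^2 * lam k / (z - lam k))))"
proof -
  let ?U = "u (n+1)" and ?c = "ext_basis n f"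
  have U: "unitary_mat (n+1) ?U" and V: "u n \<in> carrier_mat n n"
    using vi n1 by (auto simp: virtual_isometry_def unitary_mat_def)
  have UC: "?U \<in> carrier_mat (n+1) (n+1)" using U by (simp add: unitary_mat_def)
  have x: "col ?U n = ?U *\<^sub>v unit_vec (n+1) n" by (rule col_eq_mult_unit_vec[OF UC]) simp
  have xC: "col ?U n \<in> carrier_vec (n+1)" by (rule col_carrier_vec[OF _ UC]) simp
  have coeff: "col ?U n \<bullet>c ?c k = (if k < n then mu k else nu)" if "k < n+1" for k
    unfolding x decomp
    using cscalar_prod_orthonormal_combination[where a="\<lambda>k. if k < n then mu k else nu",
        OF _ ext_basis_orthonormal[OF f_carrier f_orthonormal] that]
    by (simp add: ext_basis_def)
  have nu_entry: "?U $$ (n,n) = nu"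
    using coeff[of n] cscalar_prod_unit_vec_right[OF xC, of n] UC by (simp add: ext_basis_def)
  have nu1: "nu \<noteq> 1" and Vproj: "u n = proj_last n ?U"
    using virtual_isometry_proj_eq_proj_last[OF vi n1] x_ne[folded x] nu_entry by auto
  show ?thesis
  proof (intro conjI allI impI nu1)
    fix z assume z: "z \<notin> lam ` {..<n}"
    show "det (z \<cdot>\<^sub>m 1\<^sub>m (n+1) - ?U) = det (z \<cdot>\<^sub>m 1\<^sub>m n - u n) / (cnj nu - 1) *
        ((z - nu) * (cnj nu - 1) - (z - 1) * (\<Sum>k<n. (complex_of_real (cmod (mu k)))^2 * lam k / (z - lam k)))"
      using det_char_mat_via_proj_last[OF U _ f_carrier f_orthonormal _ z] coeff f_eigen
        det_char_mat_of_orthonormal_eigenbasis[OF V f_carrier f_orthonormal f_eigen, of z]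
        cnj_diff_one_neq_zero[OF nu1] nu_entry nu1
      by (simp add: Vproj field_simps)
  qed
qed

end
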